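(* Let $F$ be a violating edge set and let $(\mathcal{T},\mathcal{M},y)$ be a tree embedding of $(G,\tilde x)$ that is good for $F$. Let $(A,B)\in Z_F$ and let $S\subseteq V(\mathcal{T})$ be such that all leaves corresponding to $A$ lie in $S$ and all leaves corresponding to $B$ lie in $V(\mathcal{T})\setminus S$. Then $y\big(\delta_{\mathcal{T}\setminus\mathcal{M}^{-1}(F)}(S)\big)\ge\frac{1}{4(p+q)\beta}$.
   Context: Setting: $G=(V,E)$ is an undirected graph with edges partitioned into safe edges $\mathcal{S}$ and unsafe edges; $p,q$ are nonnegative integers with $p+q\ge1$; $(s_i,t_i)$, $i\in[k]$, are terminal pairs; $H\subseteq E$ is such that every pair is $(p,q)$-flex-connected in $H$ (every cut $\delta_H(S)$ separating $s_i$ from $t_i$ has at least $p$ safe edges or at least $p+q$ edges). A set $S\subseteq V$ is violated if it separates some pair, $|\delta_H(S)|=p+q$ and $|\delta_H(S)\cap\mathcal{S}|<p$; a violating edge set is $F=\delta_H(S)$ for a violated $S$. Let $\beta\ge1$. Let $x:E\setminus H\to[0,1]$ satisfy $x(\delta_{E\setminus H}(S))\ge1$ for every violated $S$, and assume $0<x_e<\frac{1}{4(p+q)\beta}$ for every $e\in E\setminus H$. Define capacities $\tilde x_e=\frac{1}{4(p+q)\beta}$ for $e\in H$ and $\tilde x_e=x_e$ for $e\in E\setminus H$. A tree embedding of $(G,\tilde x)$ is a tree $\mathcal{T}$ with $\mathcal{M}_1:V(\mathcal{T})\to V$ restricting to a bijection between leaves and $V$ (we identify vertices with leaves), and $\mathcal{M}_2$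 mapping each tree edge $(a,b)$ to a path in $G$ between $\mathcal{M}_1(a),\mathcal{M}_1(b)$; capacities $y(f)=\tilde x(\delta_G(A'))$ with $A'$ the vertex set of leaves in one component of $\mathcal{T}-f$; $\mathcal{M}^{-1}(F)=\{f:\mathcal{M}_2(f)\cap F\ne\emptyset\}$; good for $F$ means $y(\mathcal{M}^{-1}(F))\le\frac12$. $\delta_{\mathcal{T}\setminus\mathcal{M}^{-1}(F)}(S)$ denotes tree edges not in $\mathcal{M}^{-1}(F)$ with exactly one endpoint in $S$. $\mathcal{Q}_F$ is the set of components of $(V,H\setminus F)$; $Q_{s_i},Q_{t_i}$ contain $s_i,t_i$; $Q\in\mathcal{Q}_F$ is shattered if its leaves are not all in one component of $\mathcal{T}-\mathcal{M}^{-1}(F)$; disjoint $A,B$ partition the shattered components if each shattered component lies in $A$ or in $B$; $Z_F=\{(A\cup Q_{s_i},B\cup Q_{t_i}):(A,B)\text{ partitions the shattered components},i\in[k]\}$. *)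

theory Defs
  imports Complex_Main
begin

text \<open>Undirected (multi)graphs are given by an edge set Es of an abstract edge type
  together with an endpoint map ends (ends e = {u,w}; a loop has ends e = {u}).\<close>

definition cut :: "'e set \<Rightarrow> ('e \<Rightarrow> 'v set) \<Rightarrow> 'v set \<Rightarrow> 'e set" where
  "cut Es ends S = {e \<in> Es. ends e \<inter> S \<noteq> {} \<and> ends e - S \<noteq> {}}"

definition adj :: "'e set \<Rightarrow> ('e \<Rightarrow> 'v set) \<Rightarrow> ('v \<times> 'v) set" where
  "adj Es ends = {(u, w). \<exists>e\<in>Es. ends e = {u, w}}"

definition comp_of :: "'e set \<Rightarrow> ('e \<Rightarrow> 'v set) \<Rightarrow> 'v \<Rightarrow> 'v set" where
  "comp_of Es ends v = {w. (v, w) \<in> (adj Es ends)\<^sup>*}"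

definition components :: "'v set \<Rightarrow> 'e set \<Rightarrow> ('e \<Rightarrow> 'v set) \<Rightarrow> 'v set set" where
  "components V Es ends = comp_of Es ends ` V"

definition separates :: "'v set \<Rightarrow> 'v \<Rightarrow> 'v \<Rightarrow> bool" where
  "separates S s t \<longleftrightarrow> (s \<in> S) \<noteq> (t \<in> S)"

definition flex_connected ::
  "'v set \<Rightarrow> 'e set \<Rightarrow> ('e \<Rightarrow> 'v set) \<Rightarrow> 'e set \<Rightarrow> nat \<Rightarrow> nat \<Rightarrow> 'v \<Rightarrow> 'v \<Rightarrow> bool" where
  "flex_connected V H ends Safe p q s t \<longleftrightarrow>
     (\<forall>S. S \<subseteq> V \<and> separates S s t \<longrightarrow>
        card (cut H ends S \<inter> Safe) \<ge> p \<or> card (cut H ends S) \<ge> p + q)"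

definition violated ::
  "'v set \<Rightarrow> 'e set \<Rightarrow> ('e \<Rightarrow> 'v set) \<Rightarrow> 'e set \<Rightarrow> nat \<Rightarrow> nat \<Rightarrow> nat \<Rightarrow>
   (nat \<Rightarrow> 'v) \<Rightarrow> (nat \<Rightarrow> 'v) \<Rightarrow> 'v set \<Rightarrow> bool" where
  "violated V H ends Safe p q k s t S \<longleftrightarrow>
     S \<subseteq> V \<and> (\<exists>i\<in>{1..k}. separates S (s i) (t i)) \<and>
     card (cut H ends S) = p + q \<and> card (cut H ends S \<inter> Safe) < p"

definition violating_edge_set ::
  "'v set \<Rightarrow> 'e set \<Rightarrow> ('e \<Rightarrow> 'v set) \<Rightarrow> 'e set \<Rightarrow> nat \<Rightarrow> nat \<Rightarrow> nat \<Rightarrow>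
   (nat \<Rightarrow> 'v) \<Rightarrow> (nat \<Rightarrow> 'v) \<Rightarrow> 'e set \<Rightarrow> bool" where
  "violating_edge_set V H ends Safe p q k s t F \<longleftrightarrow>
     (\<exists>S. violated V H ends Safe p q k s t S \<and> F = cut H ends S)"

text \<open>A tree: finite, nonempty, connected, and acyclic (every edge is a bridge,
  i.e. removing it disconnects its endpoints; this excludes cycles and parallel edges).\<close>
definition is_tree :: "'n set \<Rightarrow> 'f set \<Rightarrow> ('f \<Rightarrow> 'n set) \<Rightarrow> bool" where
  "is_tree N TE tends \<longleftrightarrow>
     finite N \<and> N \<noteq> {} \<and> finite TE \<and>
     (\<forall>f\<in>TE. tends f \<subseteq> N \<and> card (tends f) = 2) \<and>
     (\<forall>a\<in>N. \<forall>b\<in>N. (a, b) \<in> (adj TE tends)\<^sup>*) \<and>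
     (\<forall>f\<in>TE. \<forall>a b. tends f = {a, b} \<longrightarrow> (a, b) \<notin> (adj (TE - {f}) tends)\<^sup>*)"

definition leaves :: "'n set \<Rightarrow> 'f set \<Rightarrow> ('f \<Rightarrow> 'n set) \<Rightarrow> 'n set" where
  "leaves N TE tends = {a \<in> N. card {f \<in> TE. a \<in> tends f} \<le> 1}"

definition is_path :: "'e set \<Rightarrow> ('e \<Rightarrow> 'v set) \<Rightarrow> 'v \<Rightarrow> 'v \<Rightarrow> 'e list \<Rightarrow> bool" where
  "is_path E ends u w es \<longleftrightarrow>
     (\<exists>vs. length vs = Suc (length es) \<and> hd vs = u \<and> last vs = w \<and> distinct vs \<and>
        (\<forall>i<length es. es ! i \<in> E \<and> ends (es ! i) = {vs ! i, vs ! Suc i}))"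

definition tree_embedding ::
  "'v set \<Rightarrow> 'e set \<Rightarrow> ('e \<Rightarrow> 'v set) \<Rightarrow> 'n set \<Rightarrow> 'f set \<Rightarrow> ('f \<Rightarrow> 'n set) \<Rightarrow>
   ('n \<Rightarrow> 'v) \<Rightarrow> ('f \<Rightarrow> 'e list) \<Rightarrow> bool" where
  "tree_embedding V E ends N TE tends M1 M2 \<longleftrightarrow>
     is_tree N TE tends \<and> (\<forall>a\<in>N. M1 a \<in> V) \<and>
     bij_betw M1 (leaves N TE tends) V \<and>
     (\<forall>f\<in>TE. \<exists>a b. tends f = {a, b} \<and> is_path E ends (M1 a) (M1 b) (M2 f))"

definition xt :: "'e set \<Rightarrow> nat \<Rightarrow> nat \<Rightarrow> real \<Rightarrow> ('e \<Rightarrow> real) \<Rightarrow> 'e \<Rightarrow> real" where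
  "xt H p q \<beta> x e = (if e \<in> H then 1 / (4 * real (p + q) * \<beta>) else x e)"

definition side ::
  "'n set \<Rightarrow> 'f set \<Rightarrow> ('f \<Rightarrow> 'n set) \<Rightarrow> ('n \<Rightarrow> 'v) \<Rightarrow> 'f \<Rightarrow> 'n \<Rightarrow> 'v set" where
  "side N TE tends M1 f u =
     M1 ` {a \<in> leaves N TE tends. (u, a) \<in> (adj (TE - {f}) tends)\<^sup>*}"

definition ycap ::
  "'e set \<Rightarrow> ('e \<Rightarrow> 'v set) \<Rightarrow> ('e \<Rightarrow> real) \<Rightarrow> 'n set \<Rightarrow> 'f set \<Rightarrow> ('f \<Rightarrow> 'n set) \<Rightarrow>
   ('n \<Rightarrow> 'v) \<Rightarrow> 'f \<Rightarrow> real" where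
  "ycap E ends xc N TE tends M1 f =
     sum xc (cut E ends (side N TE tends M1 f (SOME u. u \<in> tends f)))"

definition Minv :: "'f set \<Rightarrow> ('f \<Rightarrow> 'e list) \<Rightarrow> 'e set \<Rightarrow> 'f set" where
  "Minv TE M2 F = {f \<in> TE. set (M2 f) \<inter> F \<noteq> {}}"

definition shattered ::
  "'n set \<Rightarrow> 'f set \<Rightarrow> ('f \<Rightarrow> 'n set) \<Rightarrow> ('n \<Rightarrow> 'v) \<Rightarrow> ('f \<Rightarrow> 'e list) \<Rightarrow> 'e set \<Rightarrow>
   'v set \<Rightarrow> bool" where
  "shattered N TE tends M1 M2 F Q \<longleftrightarrow>
     \<not> (\<exists>c\<in>N. \<forall>a\<in>leaves N TE tends. M1 a \<in> Q \<longrightarrow>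
           (c, a) \<in> (adj (TE - Minv TE M2 F) tends)\<^sup>*)"

definition Z_F ::
  "'v set \<Rightarrow> 'e set \<Rightarrow> ('e \<Rightarrow> 'v set) \<Rightarrow> nat \<Rightarrow> (nat \<Rightarrow> 'v) \<Rightarrow> (nat \<Rightarrow> 'v) \<Rightarrow>
   'n set \<Rightarrow> 'f set \<Rightarrow> ('f \<Rightarrow> 'n set) \<Rightarrow> ('n \<Rightarrow> 'v) \<Rightarrow> ('f \<Rightarrow> 'e list) \<Rightarrow> 'e set \<Rightarrow>
   ('v set \<times> 'v set) set" where
  "Z_F V H ends k s t N TE tends M1 M2 F =
     {(\<Union>\<A> \<union> comp_of (H - F) ends (s i), \<Union>\<B> \<union> comp_of (H - F) ends (t i)) | \<A> \<B> i.
        i \<in> {1..k} \<and> \<A> \<inter> \<B> = {} \<and>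
        \<A> \<union> \<B> = {Q \<in> components V (H - F) ends. shattered N TE tends M1 M2 F Q}}"

end

(*
  Let S' be the set of graph vertices whose leaves lie in S.

  If some edge e of H - F crosses S', the component of H - F containing e is not
  shattered: a shattered component belongs to A or to B and so lies on one side of S'.
  Hence the leaves of the endpoints of e are joined in T - M^-1(F), some edge f of
  that tree path crosses S and separates them in T, and e lies in the fundamental cut
  of f; so y(f) >= x~(e) = 1/(4(p+q)beta).

  Otherwise delta_H(S') is contained in F while S' separates some s_i from t_i, so
  flex-connectivity together with |F| = p+q and |F cap Safe| < p forces
  delta_H(S') = F: the set S' is violated and x(delta(S')) >= 1. Every such edge again
  lies in the fundamental cut of an edge of delta_T(S), so y(delta_T(S)) >= 1, and
  discarding M^-1(F), of capacity at most 1/2 since the embedding is good, leaves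
  at least 1/2 >= 1/(4(p+q)beta).
*)
theory Submission
  imports Defs
begin

lemma sym_adj: "sym (adj Es ends)"
  unfolding adj_def sym_def by (auto simp: insert_commute)

lemma adj_rtrancl_sym: "(a, b) \<in> (adj Es ends)\<^sup>* \<Longrightarrow> (b, a) \<in> (adj Es ends)\<^sup>*"
  using sym_rtrancl[OF sym_adj] by (meson symD)

lemma adj_rtrancl_mono: "Es \<subseteq> Es' \<Longrightarrow> (adj Es ends)\<^sup>* \<subseteq> (adj Es' ends)\<^sup>*"
  by (rule rtrancl_mono) (auto simp: adj_def)

lemma adj_rtrancl_if_ends:
  assumes "e \<in> Es" "finite (ends e)" "card (ends e) \<le> 2" "u \<in> ends e" "w \<in> ends e"
  shows "(u, w) \<in> (adj Es ends)\<^sup>*"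
proof (cases "u = w")
  case False
  with assms have "ends e = {u, w}"
    by (metis card_2_iff card_seteq empty_subsetI insert_subset)
  with assms(1) show ?thesis unfolding adj_def by auto
qed simp

lemma adj_rtrancl_diff_edge_cases:
  assumes "(a, b) \<in> (adj Es ends)\<^sup>*"
  shows "(a, b) \<in> (adj (Es - {f}) ends)\<^sup>* \<or>
    (\<exists>x1\<in>ends f. \<exists>x2\<in>ends f.
       (a, x1) \<in> (adj (Es - {f}) ends)\<^sup>* \<and> (x2, b) \<in> (adj (Es - {f}) ends)\<^sup>*)"
  using assms
proof (induction rule: rtrancl_induct)
  case (step m n)
  then obtain h where h: "h \<in> Es" "ends h = {m, n}" unfolding adj_def by auto
  show ?case
  proof (cases "h = f")
    case True
    with h step.IH show ?thesis by blast
  next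
    case False
    with h have "(m, n) \<in> adj (Es - {f}) ends" unfolding adj_def by auto
    with step.IH show ?thesis by (meson rtrancl.rtrancl_into_rtrancl)
  qed
qed simp

lemma cut_subset: "cut Es ends S \<subseteq> Es"
  by (auto simp: cut_def)

lemma adj_rtrancl_diff_cut_stays:
  assumes "(a, b) \<in> (adj (Es - cut Es tends S) tends)\<^sup>*" "a \<in> S"
  shows "b \<in> S"
  using assms
proof (induction rule: rtrancl_induct)
  case (step m n)
  then obtain h where "h \<in> Es - cut Es tends S" "tends h = {m, n}" unfolding adj_def by auto
  with step show ?case unfolding cut_def by auto
qed

lemma is_tree_edge_card: "is_tree N TE tends \<Longrightarrow> f \<in> TE \<Longrightarrow> card (tends f) = 2"
  unfolding is_tree_def by simp

lemma is_tree_edge_endsE: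
  assumes "is_tree N TE tends" "f \<in> TE" "c \<in> tends f"
  obtains c' where "tends f = {c, c'}" "c \<noteq> c'"
proof -
  have "card (tends f) = 2" using assms(1,2) by (rule is_tree_edge_card)
  with assms(3) that show ?thesis by (metis card_2_iff doubleton_eq_iff insertE singletonD)
qed

lemma is_tree_connected:
  "is_tree N TE tends \<Longrightarrow> a \<in> N \<Longrightarrow> b \<in> N \<Longrightarrow> (a, b) \<in> (adj TE tends)\<^sup>*"
  unfolding is_tree_def by simp

lemma leaves_subset: "leaves N TE tends \<subseteq> N"
  unfolding leaves_def by simp

lemma is_tree_reach_from_edge_ends:
  assumes T: "is_tree N TE tends" and f: "f \<in> TE" "tends f = {u, w}" and n: "n \<in> N"
  shows "(u, n) \<in> (adj (TE - {f}) tends)\<^sup>* \<or> (w, n) \<in> (adj (TE - {f}) tends)\<^sup>*"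
proof -
  have "u \<in> N" using T f unfolding is_tree_def by auto
  from adj_rtrancl_diff_edge_cases[OF is_tree_connected[OF T this n], of f] f(2)
  show ?thesis by auto
qed

lemma is_tree_bridge_separates:
  assumes T: "is_tree N TE tends" and f: "f \<in> TE" "c \<in> tends f" and ab: "a \<in> N" "b \<in> N"
    and sep: "(a, b) \<notin> (adj (TE - {f}) tends)\<^sup>*"
  shows "(c, a) \<in> (adj (TE - {f}) tends)\<^sup>* \<longleftrightarrow> (c, b) \<notin> (adj (TE - {f}) tends)\<^sup>*"
proof -
  obtain c' where c': "tends f = {c, c'}" using is_tree_edge_endsE[OF T f] .
  note reach = is_tree_reach_from_edge_ends[OF T f(1) c']
  have "(d, a) \<notin> (adj (TE - {f}) tends)\<^sup>* \<or> (d, b) \<notin> (adj (TE - {f}) tends)\<^sup>*" for d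
    using sep by (meson adj_rtrancl_sym rtrancl_trans)
  with reach[OF ab(1)] reach[OF ab(2)] show ?thesis by blast
qed

text \<open>If every a-b walk in Es used f, the endpoints of f would be joined in TE - {f}
  through a and b, contradicting that f is a bridge.\<close>
lemma is_tree_reach_diff_edge:
  assumes T: "is_tree N TE tends" and f: "f \<in> TE" and Es: "Es \<subseteq> TE"
    and ab: "(a, b) \<in> (adj Es tends)\<^sup>*" and abf: "(a, b) \<in> (adj (TE - {f}) tends)\<^sup>*"
  shows "(a, b) \<in> (adj (Es - {f}) tends)\<^sup>*"
proof (rule ccontr)
  let ?R = "(adj (Es - {f}) tends)\<^sup>*" and ?Rf = "(adj (TE - {f}) tends)\<^sup>*"
  assume "(a, b) \<notin> ?R"
  with adj_rtrancl_diff_edge_cases[OF ab, of f] obtain x1 x2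
    where x: "x1 \<in> tends f" "x2 \<in> tends f" "(a, x1) \<in> ?R" "(x2, b) \<in> ?R"
    by blast
  have "x1 \<noteq> x2"
    using x \<open>(a, b) \<notin> ?R\<close> rtrancl_trans by metis
  moreover obtain c' where "tends f = {x1, c'}" using is_tree_edge_endsE[OF T f x(1)] .
  ultimately have "tends f = {x1, x2}" using x(2) by auto
  with T f have "(x1, x2) \<notin> ?Rf" unfolding is_tree_def by blast
  moreover have "?R \<subseteq> ?Rf" using Es by (intro adj_rtrancl_mono) auto
  with x have "(x1, a) \<in> ?Rf" "(b, x2) \<in> ?Rf" by (auto intro: adj_rtrancl_sym)
  ultimately show False using abf by (meson rtrancl_trans)
qed

lemma is_tree_reach_diff_edges:
  assumes T: "is_tree N TE tends" and "finite D"
    and D: "\<forall>f\<in>D. f \<in> TE \<and> (a, b) \<in> (adj (TE - {f}) tends)\<^sup>*"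
    and ab: "(a, b) \<in> (adj Es tends)\<^sup>*" and Es: "Es \<subseteq> TE"
  shows "(a, b) \<in> (adj (Es - D) tends)\<^sup>*"
  using \<open>finite D\<close> D
proof (induction D rule: finite_induct)
  case (insert f D)
  then have "(a, b) \<in> (adj (Es - D) tends)\<^sup>*" by simp
  moreover have "f \<in> TE" "(a, b) \<in> (adj (TE - {f}) tends)\<^sup>*" using insert.prems by auto
  moreover have "Es - D \<subseteq> TE" using Es by auto
  ultimately have "(a, b) \<in> (adj (Es - D - {f}) tends)\<^sup>*"
    using is_tree_reach_diff_edge[OF T] by blast
  moreover have "Es - D - {f} = Es - insert f D" by auto
  ultimately show ?case by simp
qed (use ab in simp)

lemma is_tree_cut_edge_separates:
  assumes T: "is_tree N TE tends" and Es: "Es \<subseteq> TE" and "a \<in> S" "b \<notin> S"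
    and ab: "(a, b) \<in> (adj Es tends)\<^sup>*"
  shows "\<exists>f\<in>cut Es tends S. (a, b) \<notin> (adj (TE - {f}) tends)\<^sup>*"
proof (rule ccontr)
  have "finite TE" using T unfolding is_tree_def by simp
  then have fin: "finite (cut Es tends S)"
    using cut_subset[of Es tends S] Es by (meson finite_subset)
  assume "\<not> ?thesis"
  then have "\<forall>f\<in>cut Es tends S. f \<in> TE \<and> (a, b) \<in> (adj (TE - {f}) tends)\<^sup>*"
    using Es cut_subset[of Es tends S] by blast
  from is_tree_reach_diff_edges[OF T fin this ab Es] have "b \<in> S"
    using \<open>a \<in> S\<close> by (rule adj_rtrancl_diff_cut_stays)
  with \<open>b \<notin> S\<close> show False by simp
qed

lemma side_leaf_iff:
  assumes "inj_on M1 (leaves N TE tends)" "a \<in> leaves N TE tends"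
  shows "M1 a \<in> side N TE tends M1 f c \<longleftrightarrow> (c, a) \<in> (adj (TE - {f}) tends)\<^sup>*"
  using assms unfolding side_def by (auto dest: inj_onD)

lemma is_tree_side_cut:
  assumes T: "is_tree N TE tends" and inj: "inj_on M1 (leaves N TE tends)"
    and f: "f \<in> TE" "c \<in> tends f"
    and a: "a \<in> leaves N TE tends" and b: "b \<in> leaves N TE tends"
    and sep: "(a, b) \<notin> (adj (TE - {f}) tends)\<^sup>*"
    and e: "e \<in> E" "M1 a \<in> ends e" "M1 b \<in> ends e"
  shows "e \<in> cut E ends (side N TE tends M1 f c)"
proof -
  have "a \<in> N" "b \<in> N" using a b leaves_subset[of N TE tends] by blast+
  from is_tree_bridge_separates[OF T f this sep]
  have "M1 a \<in> side N TE tends M1 f c \<longleftrightarrow> M1 b \<notin> side N TE tends M1 f c"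
    using side_leaf_iff[OF inj a] side_leaf_iff[OF inj b] by simp
  with e show ?thesis unfolding cut_def by blast
qed

lemma ycap_ge_sum:
  assumes "finite E" "\<forall>e\<in>E. 0 \<le> xc e"
    and "D \<subseteq> cut E ends (side N TE tends M1 f (SOME u. u \<in> tends f))"
  shows "sum xc D \<le> ycap E ends xc N TE tends M1 f"
  unfolding ycap_def
proof (rule sum_mono2)
  show "finite (cut E ends (side N TE tends M1 f (SOME u. u \<in> tends f)))"
    by (rule finite_subset[OF cut_subset assms(1)])
qed (use assms(2,3) cut_subset[of E ends] in blast)+

lemma ycap_nonneg: "\<forall>e\<in>E. 0 \<le> xc e \<Longrightarrow> 0 \<le> ycap E ends xc N TE tends M1 f"
  unfolding ycap_def cut_def by (rule sum_nonneg) blast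

lemma cut_image_leavesE:
  assumes img: "M1 ` L = V" and e: "e \<in> cut Es ends (M1 ` (L \<inter> S))" "ends e \<subseteq> V"
  obtains a b where "a \<in> L" "a \<in> S" "M1 a \<in> ends e" "b \<in> L" "b \<notin> S" "M1 b \<in> ends e"
proof -
  obtain a w where a: "a \<in> L" "a \<in> S" "M1 a \<in> ends e" and w: "w \<in> ends e" "w \<notin> M1 ` (L \<inter> S)"
    using e(1) unfolding cut_def by blast
  moreover obtain b where "b \<in> L" "w = M1 b" using w(1) e(2) img by blast
  ultimately show ?thesis using that by blast
qed

text \<open>Every edge of D crosses the side of some tree edge in the cut, since a tree edge
  separating the leaves of its endpoints lies in that cut; grouping D by such an edge g e
  bounds the capacity of D by the tree capacity of the cut.\<close>
lemma sum_le_ycap_cut: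
  assumes T: "is_tree N TE tends" and bij: "bij_betw M1 (leaves N TE tends) V"
    and "finite E" and ends: "\<forall>e\<in>E. ends e \<subseteq> V"
    and xc: "\<forall>e\<in>E. 0 \<le> xc e" and Es: "Es \<subseteq> TE"
    and D: "D \<subseteq> cut E ends (M1 ` (leaves N TE tends \<inter> S))"
    and conn: "\<forall>e\<in>D. \<forall>a\<in>leaves N TE tends \<inter> S. \<forall>b\<in>leaves N TE tends - S.
                 M1 a \<in> ends e \<longrightarrow> M1 b \<in> ends e \<longrightarrow> (a, b) \<in> (adj Es tends)\<^sup>*"
  shows "sum xc D \<le> sum (ycap E ends xc N TE tends M1) (cut Es tends S)"
proof -
  let ?side = "\<lambda>f. side N TE tends M1 f (SOME u. u \<in> tends f)"
  let ?y = "ycap E ends xc N TE tends M1"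
  have inj: "inj_on M1 (leaves N TE tends)" and img: "M1 ` leaves N TE tends = V"
    using bij by (simp_all add: bij_betw_def)
  have "D \<subseteq> E" using D cut_subset[of E ends] by blast
  have "\<exists>f\<in>cut Es tends S. e \<in> cut E ends (?side f)" if e: "e \<in> D" for e
  proof -
    have "e \<in> E" using e \<open>D \<subseteq> E\<close> by blast
    obtain a b where a: "a \<in> leaves N TE tends" "a \<in> S" "M1 a \<in> ends e"
      and b: "b \<in> leaves N TE tends" "b \<notin> S" "M1 b \<in> ends e"
    proof (rule cut_image_leavesE[OF img])
      show "e \<in> cut E ends (M1 ` (leaves N TE tends \<inter> S))" using D e by blast
      show "ends e \<subseteq> V" using ends \<open>e \<in> E\<close> by blast
    qed
    have ab: "(a, b) \<in> (adj Es tends)\<^sup>*" using conn e a b by simp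
    obtain f where f: "f \<in> cut Es tends S" "(a, b) \<notin> (adj (TE - {f}) tends)\<^sup>*"
      using is_tree_cut_edge_separates[OF T Es a(2) b(2) ab] by blast
    have "f \<in> TE" using f(1) cut_subset[of Es tends S] Es by blast
    then have "card (tends f) = 2" by (rule is_tree_edge_card[OF T])
    then have "tends f \<noteq> {}" by auto
    then have c: "(SOME u. u \<in> tends f) \<in> tends f" by (simp add: some_in_eq)
    from is_tree_side_cut[where ends = ends, OF T inj \<open>f \<in> TE\<close> c a(1) b(1) f(2) \<open>e \<in> E\<close> a(3) b(3)] f(1)
    show ?thesis ..
  qed
  then have "\<forall>e\<in>D. \<exists>f. f \<in> cut Es tends S \<and> e \<in> cut E ends (?side f)" by blast
  from bchoice[OF this] obtain g
    where g: "\<forall>e\<in>D. g e \<in> cut Es tends S \<and> e \<in> cut E ends (?side (g e))" by blast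
  have "finite D" using \<open>finite E\<close> \<open>D \<subseteq> E\<close> by (rule finite_subset[rotated])
  then have "sum xc D = (\<Sum>f\<in>g ` D. sum xc {e \<in> D. g e = f})"
    by (rule sum.image_gen)
  also have "\<dots> \<le> sum ?y (g ` D)"
  proof (rule sum_mono)
    fix f
    show "sum xc {e \<in> D. g e = f} \<le> ?y f"
      by (rule ycap_ge_sum[OF \<open>finite E\<close> xc]) (use g in auto)
  qed
  also have "\<dots> \<le> sum ?y (cut Es tends S)"
  proof (rule sum_mono2)
    have "finite TE" using T unfolding is_tree_def by simp
    then show "finite (cut Es tends S)"
      using cut_subset[of Es tends S] Es by (meson finite_subset)
    show "g ` D \<subseteq> cut Es tends S" using g by blast
  qed (rule ycap_nonneg[OF xc])
  finally show ?thesis .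
qed

lemma sum_cut_le_sum_cut_diff:
  fixes y :: "'f \<Rightarrow> real"
  assumes "finite Es" "finite M" "\<forall>f\<in>M. 0 \<le> y f"
  shows "sum y (cut Es ends S) \<le> sum y (cut (Es - M) ends S) + sum y M"
proof -
  have "sum y (cut Es ends S) \<le> sum y (cut (Es - M) ends S \<union> M)"
    using assms by (intro sum_mono2) (auto simp: cut_def)
  also have "\<dots> = sum y (cut (Es - M) ends S) + sum y M"
    using assms by (intro sum.union_disjoint) (auto simp: cut_def)
  finally show ?thesis .
qed

lemma ycap_cut_diff_ge_half:
  fixes xc :: "'e \<Rightarrow> real"
  assumes T: "is_tree N TE tends" and bij: "bij_betw M1 (leaves N TE tends) V"
    and "finite E" and ends: "\<forall>e\<in>E. ends e \<subseteq> V" and xc: "\<forall>e\<in>E. 0 \<le> xc e"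
    and D: "D \<subseteq> cut E ends (M1 ` (leaves N TE tends \<inter> S))" "1 \<le> sum xc D"
    and M: "M \<subseteq> TE" "sum (ycap E ends xc N TE tends M1) M \<le> 1 / 2"
  shows "1 / 2 \<le> sum (ycap E ends xc N TE tends M1) (cut (TE - M) tends S)"
proof -
  let ?L = "leaves N TE tends" and ?y = "ycap E ends xc N TE tends M1"
  have conn: "(a, b) \<in> (adj TE tends)\<^sup>*" if "a \<in> ?L" "b \<in> ?L" for a b
    using is_tree_connected[OF T] that leaves_subset[of N TE tends] by (simp add: subset_iff)
  have "finite TE" using T unfolding is_tree_def by simp
  have "sum xc D \<le> sum ?y (cut TE tends S)"
  proof (rule sum_le_ycap_cut[OF T bij \<open>finite E\<close> ends xc _ D(1)])
    show "\<forall>e\<in>D. \<forall>a\<in>?L \<inter> S. \<forall>b\<in>?L - S.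
        M1 a \<in> ends e \<longrightarrow> M1 b \<in> ends e \<longrightarrow> (a, b) \<in> (adj TE tends)\<^sup>*"
      using conn by simp
  qed simp
  also have "\<dots> \<le> sum ?y (cut (TE - M) tends S) + sum ?y M"
  proof (rule sum_cut_le_sum_cut_diff[OF \<open>finite TE\<close>])
    show "finite M" using M(1) \<open>finite TE\<close> by (rule finite_subset)
  qed (simp add: ycap_nonneg[OF xc])
  finally show ?thesis using D(2) M(2) by linarith
qed

lemma separates_image_leaves:
  assumes "M1 ` L = V" "\<forall>a\<in>L. M1 a \<in> A \<longrightarrow> a \<in> S" "\<forall>a\<in>L. M1 a \<in> B \<longrightarrow> a \<notin> S"
    and "u \<in> A" "u \<in> V" "w \<in> B"
  shows "separates (M1 ` (L \<inter> S)) u w"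
  using assms unfolding separates_def by blast

lemma Z_F_terminalsE:
  assumes "(A, B) \<in> Z_F V H ends k s t N TE tends M1 M2 F"
  obtains i where "i \<in> {1..k}" "s i \<in> A" "t i \<in> B"
proof -
  obtain i where "i \<in> {1..k}" "comp_of (H - F) ends (s i) \<subseteq> A" "comp_of (H - F) ends (t i) \<subseteq> B"
    using assms unfolding Z_F_def by blast
  moreover have "v \<in> comp_of Es ends v" for Es v unfolding comp_of_def by simp
  ultimately show ?thesis using that by blast
qed

lemma Z_F_shattered_subset:
  assumes "(A, B) \<in> Z_F V H ends k s t N TE tends M1 M2 F"
    and "Q \<in> components V (H - F) ends" "shattered N TE tends M1 M2 F Q"
  shows "Q \<subseteq> A \<or> Q \<subseteq> B"
  using assms unfolding Z_F_def by blast

lemma not_shattered_leaves_connected: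
  assumes "\<not> shattered N TE tends M1 M2 F Q"
    and "a \<in> leaves N TE tends" "M1 a \<in> Q" "b \<in> leaves N TE tends" "M1 b \<in> Q"
  shows "(a, b) \<in> (adj (TE - Minv TE M2 F) tends)\<^sup>*"
proof -
  obtain r where "\<forall>c\<in>leaves N TE tends. M1 c \<in> Q \<longrightarrow> (r, c) \<in> (adj (TE - Minv TE M2 F) tends)\<^sup>*"
    using assms(1) unfolding shattered_def by auto
  with assms(2-5) have "(r, a) \<in> (adj (TE - Minv TE M2 F) tends)\<^sup>*"
    "(r, b) \<in> (adj (TE - Minv TE M2 F) tends)\<^sup>*" by simp_all
  then show ?thesis by (meson adj_rtrancl_sym rtrancl_trans)
qed

text \<open>The component of H - F through the endpoints cannot be shattered, since the leaves of a
  shattered component lie entirely on one side of S.\<close>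
lemma Z_F_crossing_edge_connected:
  assumes Z: "(A, B) \<in> Z_F V H ends k s t N TE tends M1 M2 F"
    and AS: "\<forall>c\<in>leaves N TE tends. M1 c \<in> A \<longrightarrow> c \<in> S"
    and BS: "\<forall>c\<in>leaves N TE tends. M1 c \<in> B \<longrightarrow> c \<notin> S"
    and e: "e \<in> H - F" "finite (ends e)" "card (ends e) \<le> 2" "ends e \<subseteq> V"
    and a: "a \<in> leaves N TE tends \<inter> S" "M1 a \<in> ends e"
    and b: "b \<in> leaves N TE tends - S" "M1 b \<in> ends e"
  shows "(a, b) \<in> (adj (TE - Minv TE M2 F) tends)\<^sup>*"
proof -
  let ?Q = "comp_of (H - F) ends (M1 a)"
  have Q: "?Q \<in> components V (H - F) ends" using a(2) e(4) unfolding components_def by blast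
  have "(M1 a, M1 b) \<in> (adj (H - F) ends)\<^sup>*"
    by (rule adj_rtrancl_if_ends[where ends = ends, OF e(1-3) a(2) b(2)])
  then have Qa: "M1 a \<in> ?Q" and Qb: "M1 b \<in> ?Q" unfolding comp_of_def by simp_all
  have "\<not> shattered N TE tends M1 M2 F ?Q"
  proof
    assume "shattered N TE tends M1 M2 F ?Q"
    with Z_F_shattered_subset[OF Z Q] have "?Q \<subseteq> A \<or> ?Q \<subseteq> B" by blast
    with Qa Qb AS BS a b show False by blast
  qed
  moreover have "a \<in> leaves N TE tends" "b \<in> leaves N TE tends" using a(1) b(1) by simp_all
  ultimately show ?thesis using not_shattered_leaves_connected Qa Qb by metis
qed

lemma violated_if_cut_subset_violating:
  assumes "finite H" and F: "violating_edge_set V H ends Safe p q k s t F"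
    and i: "i \<in> {1..k}" "flex_connected V H ends Safe p q (s i) (t i)"
    and S: "S \<subseteq> V" "separates S (s i) (t i)" and sub: "cut H ends S \<subseteq> F"
  shows "violated V H ends Safe p q k s t S"
proof -
  obtain S0 where "violated V H ends Safe p q k s t S0" "F = cut H ends S0"
    using F unfolding violating_edge_set_def by blast
  then have F_card: "card F = p + q" "card (F \<inter> Safe) < p"
    unfolding violated_def by auto
  have "finite F" using \<open>F = cut H ends S0\<close> \<open>finite H\<close> cut_subset[of H ends S0]
    by (simp add: finite_subset)
  then have "card (cut H ends S \<inter> Safe) \<le> card (F \<inter> Safe)"
    using sub by (intro card_mono) auto
  with F_card have safe: "card (cut H ends S \<inter> Safe) < p" by simp
  from i(2) S have "p \<le> card (cut H ends S \<inter> Safe) \<or> p + q \<le> card (cut H ends S)"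
    unfolding flex_connected_def by blast
  with safe have "p + q \<le> card (cut H ends S)" by linarith
  then have "cut H ends S = F"
    using card_seteq[OF \<open>finite F\<close> sub] F_card by simp
  then show ?thesis
    using S i F_card safe unfolding violated_def by auto
qed

lemma Z_F_cut_subset_violated:
  assumes "finite H" and F: "violating_edge_set V H ends Safe p q k s t F"
    and terminals: "\<forall>i\<in>{1..k}. s i \<in> V \<and> t i \<in> V"
    and flex: "\<forall>i\<in>{1..k}. flex_connected V H ends Safe p q (s i) (t i)"
    and Z: "(A, B) \<in> Z_F V H ends k s t N TE tends M1 M2 F"
    and img: "M1 ` leaves N TE tends = V"
    and AS: "\<forall>a\<in>leaves N TE tends. M1 a \<in> A \<longrightarrow> a \<in> S"
    and BS: "\<forall>a\<in>leaves N TE tends. M1 a \<in> B \<longrightarrow> a \<notin> S"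
    and sub: "cut H ends (M1 ` (leaves N TE tends \<inter> S)) \<subseteq> F"
  shows "violated V H ends Safe p q k s t (M1 ` (leaves N TE tends \<inter> S))"
proof -
  obtain i where i: "i \<in> {1..k}" "s i \<in> A" "t i \<in> B" by (rule Z_F_terminalsE[OF Z])
  have "s i \<in> V" using terminals i(1) by blast
  from separates_image_leaves[OF img AS BS i(2) this i(3)] show ?thesis
    by (intro violated_if_cut_subset_violating[OF \<open>finite H\<close> F i(1) _ _ _ sub])
      (use flex i(1) img in blast)+
qed

theorem lemma4p4:
  fixes V :: "'v set" and E :: "'e set" and ends :: "'e \<Rightarrow> 'v set"
    and Safe H F :: "'e set" and p q k :: nat and s t :: "nat \<Rightarrow> 'v"
    and \<beta> :: real and x :: "'e \<Rightarrow> real"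
    and N :: "'n set" and TE :: "'f set" and tends :: "'f \<Rightarrow> 'n set"
    and M1 :: "'n \<Rightarrow> 'v" and M2 :: "'f \<Rightarrow> 'e list"
    and A B S :: "_ set"
  assumes "finite V" and "finite E"
    and "\<forall>e\<in>E. ends e \<subseteq> V \<and> 1 \<le> card (ends e) \<and> card (ends e) \<le> 2"
    and "Safe \<subseteq> E"
    and "p + q \<ge> 1"
    and "\<forall>i\<in>{1..k}. s i \<in> V \<and> t i \<in> V"
    and "H \<subseteq> E"
    and "\<forall>i\<in>{1..k}. flex_connected V H ends Safe p q (s i) (t i)"
    and "\<beta> \<ge> 1"
    and "\<forall>e\<in>E - H. 0 \<le> x e \<and> x e \<le> 1"
    and "\<forall>S. violated V H ends Safe p q k s t S \<longrightarrow> sum x (cut (E - H) ends S) \<ge> 1"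
    and "\<forall>e\<in>E - H. 0 < x e \<and> x e < 1 / (4 * real (p + q) * \<beta>)"
    \<comment> \<open>F is a violating edge set\<close>
    and "violating_edge_set V H ends Safe p q k s t F"
    \<comment> \<open>a tree embedding of (G, xt) good for F\<close>
    and "tree_embedding V E ends N TE tends M1 M2"
    and "sum (ycap E ends (xt H p q \<beta> x) N TE tends M1) (Minv TE M2 F) \<le> 1 / 2"
    and "(A, B) \<in> Z_F V H ends k s t N TE tends M1 M2 F"
    and "S \<subseteq> N"
    and "\<forall>a\<in>leaves N TE tends. M1 a \<in> A \<longrightarrow> a \<in> S"
    and "\<forall>a\<in>leaves N TE tends. M1 a \<in> B \<longrightarrow> a \<notin> S"
  shows "sum (ycap E ends (xt H p q \<beta> x) N TE tends M1) (cut (TE - Minv TE M2 F) tends S)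
           \<ge> 1 / (4 * real (p + q) * \<beta>)"
proof -
  let ?L = "leaves N TE tends" and ?c = "1 / (4 * real (p + q) * \<beta>)"
  let ?xt = "xt H p q \<beta> x" and ?MF = "Minv TE M2 F" and ?S' = "M1 ` (?L \<inter> S)"
  let ?y = "ycap E ends ?xt N TE tends M1"
  have T: "is_tree N TE tends" and bij: "bij_betw M1 ?L V"
    using assms(14) unfolding tree_embedding_def by blast+
  have "1 * 1 \<le> real (p + q) * \<beta>" by (rule mult_mono) (use assms(5,9) in auto)
  then have "4 \<le> 4 * real (p + q) * \<beta>" by linarith
  then have c_pos: "0 < ?c" and c_half: "?c \<le> 1 / 2" by (simp_all add: field_simps)
  have xt_nonneg: "\<forall>e\<in>E. 0 \<le> ?xt e" using assms(10) c_pos unfolding xt_def by simp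
  have ends_V: "\<forall>e\<in>E. ends e \<subseteq> V" using assms(3) by blast
  show ?thesis
  proof (cases "cut H ends ?S' \<subseteq> F")
    case True
    have "finite H" using assms(2,7) by (rule finite_subset[rotated])
    from Z_F_cut_subset_violated[OF this assms(13,6,8,16) bij_betw_imp_surj_on[OF bij]
        assms(18,19) True]
    have "1 \<le> sum x (cut (E - H) ends ?S')" using assms(11) by blast
    also have "\<dots> = sum ?xt (cut (E - H) ends ?S')"
      by (rule sum.cong) (simp_all add: xt_def cut_def)
    finally have "1 / 2 \<le> sum ?y (cut (TE - ?MF) tends S)"
      by (intro ycap_cut_diff_ge_half[OF T bij assms(2) ends_V xt_nonneg _ _ _ assms(15)])
        (auto simp: cut_def Minv_def)
    with c_half show ?thesis by linarith
  next
    case False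
    then obtain e where e: "e \<in> cut H ends ?S'" "e \<notin> F" by blast
    then have "e \<in> E" "e \<in> H - F" using assms(7) unfolding cut_def by auto
    then have "finite (ends e)" "card (ends e) \<le> 2" "ends e \<subseteq> V"
      using assms(3) by (metis card.infinite not_one_le_zero)+
    note conn = Z_F_crossing_edge_connected[OF assms(16,18,19) \<open>e \<in> H - F\<close> this]
    have "sum ?xt {e} \<le> sum ?y (cut (TE - ?MF) tends S)"
    proof (rule sum_le_ycap_cut[OF T bij assms(2) ends_V xt_nonneg])
      show "{e} \<subseteq> cut E ends ?S'" using e(1) \<open>e \<in> E\<close> unfolding cut_def by blast
      show "\<forall>e'\<in>{e}. \<forall>a\<in>?L \<inter> S. \<forall>b\<in>?L - S.
          M1 a \<in> ends e' \<longrightarrow> M1 b \<in> ends e' \<longrightarrow> (a, b) \<in> (adj (TE - ?MF) tends)\<^sup>*"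
        using conn by simp
    qed blast
    then show ?thesis using \<open>e \<in> H - F\<close> by (simp add: xt_def)
  qed
qed

end
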